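(* Let $(G,* )$ be a group and let $\mathcal{L},\mathcal{R}$ be families of subsets of $G$ such that: (1) whenever $x*y\in L\in\mathcal{L}$, there exist $L_x,L_y\in\mathcal{L}$ with $x\in L_x$, $y\in L_y$ and $L_x*L_y\subseteq L$; (2) whenever $x*y\in R\in\mathcal{R}$, there exist $R_x,R_y\in\mathcal{R}$ with $x\in R_x$, $y\in R_y$ and $R_x*R_y\subseteq R$. Equip $G$ with the topology generated by $\mathcal{L}\cup\mathcal{R}$ as a subbase and $G\times G$ with the product topology. Then the map $f:G\times G\to G$, $f(x,y)=x*y$, is continuous.
   Context: For $A,B\subseteq G$, $A*B=\{a*b : a\in A,\ b\in B\}$. *)

theory Defs
  imports "HOL-Analysis.Analysis" "HOL-Algebra.Coset"
begin

end

theory Submission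
  imports Defs
begin

(* By continuous_on_generated_topo, multiplication is continuous once the preimage of every
   subbasic set is open; the splitting hypotheses supply, around each point of such a
   preimage, a product of two subbasic (hence open) sets inside it. *)

lemma openin_vimage_mult_generated_topology:
  fixes G (structure)
  assumes sub: "\<L> \<subseteq> \<S>" and carrier: "\<Union>\<S> = carrier G"
    and split: "\<And>x y L. \<lbrakk>x \<in> carrier G; y \<in> carrier G; L \<in> \<L>; x \<otimes> y \<in> L\<rbrakk> \<Longrightarrow>
        \<exists>Lx\<in>\<L>. \<exists>Ly\<in>\<L>. x \<in> Lx \<and> y \<in> Ly \<and> Lx <#> Ly \<subseteq> L"
    and U: "U \<in> \<L>"
  shows "openin (prod_topology (topology_generated_by \<S>) (topology_generated_by \<S>))
           ((\<lambda>(x, y). x \<otimes> y) -` U \<inter> topspace (prod_topology (topology_generated_by \<S>) (topology_generated_by \<S>)))"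
    (is "openin ?P (?m -` U \<inter> topspace ?P)")
  unfolding openin_prod_topology_alt
proof (intro allI impI)
  fix x y
  assume "(x, y) \<in> ?m -` U \<inter> topspace ?P"
  then have "x \<in> carrier G" "y \<in> carrier G" "x \<otimes> y \<in> U"
    using carrier by auto
  then obtain Lx Ly where L: "Lx \<in> \<L>" "Ly \<in> \<L>" "x \<in> Lx" "y \<in> Ly" "Lx <#> Ly \<subseteq> U"
    using split U by blast
  have "Lx \<subseteq> carrier G" "Ly \<subseteq> carrier G"
    using L sub carrier by auto
  moreover have "a \<otimes> b \<in> U" if "a \<in> Lx" "b \<in> Ly" for a b
    using L(5) that unfolding set_mult_def by blast
  ultimately have "Lx \<times> Ly \<subseteq> ?m -` U \<inter> topspace ?P"
    using carrier by auto
  moreover have "openin (topology_generated_by \<S>) Lx" "openin (topology_generated_by \<S>) Ly"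
    using L sub topology_generated_by_Basis by blast+
  ultimately show "\<exists>V W. openin (topology_generated_by \<S>) V \<and> openin (topology_generated_by \<S>) W \<and>
      x \<in> V \<and> y \<in> W \<and> V \<times> W \<subseteq> ?m -` U \<inter> topspace ?P"
    using L by blast
qed

theorem proposition5p3:
  fixes G (structure)
    and \<L> \<R> :: "'a set set"
  assumes grp: "group G"
    and L_sub: "\<L> \<subseteq> Pow (carrier G)"
    and R_sub: "\<R> \<subseteq> Pow (carrier G)"
    and L_cond: "\<And>x y L. \<lbrakk>x \<in> carrier G; y \<in> carrier G; L \<in> \<L>; x \<otimes> y \<in> L\<rbrakk> \<Longrightarrow>
        \<exists>Lx\<in>\<L>. \<exists>Ly\<in>\<L>. x \<in> Lx \<and> y \<in> Ly \<and> Lx <#> Ly \<subseteq> L"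
    and R_cond: "\<And>x y R. \<lbrakk>x \<in> carrier G; y \<in> carrier G; R \<in> \<R>; x \<otimes> y \<in> R\<rbrakk> \<Longrightarrow>
        \<exists>Rx\<in>\<R>. \<exists>Ry\<in>\<R>. x \<in> Rx \<and> y \<in> Ry \<and> Rx <#> Ry \<subseteq> R"
  shows "continuous_map
           (prod_topology (topology_generated_by (insert (carrier G) (\<L> \<union> \<R>)))
                          (topology_generated_by (insert (carrier G) (\<L> \<union> \<R>))))
           (topology_generated_by (insert (carrier G) (\<L> \<union> \<R>)))
           (\<lambda>(x, y). x \<otimes> y)"
proof -
  let ?S = "insert (carrier G) (\<L> \<union> \<R>)"
  let ?P = "prod_topology (topology_generated_by ?S) (topology_generated_by ?S)"
  let ?m = "\<lambda>(x, y). x \<otimes> y"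
  have carrier: "\<Union>?S = carrier G"
    using L_sub R_sub by auto
  have mult_closed: "?m ` topspace ?P \<subseteq> carrier G"
    using carrier grp by (auto simp: group.is_monoid monoid.m_closed)
  show ?thesis
  proof (rule continuous_on_generated_topo)
    fix U assume "U \<in> ?S"
    then consider "U = carrier G" | "U \<in> \<L>" | "U \<in> \<R>" by blast
    then show "openin ?P (?m -` U \<inter> topspace ?P)"
    proof cases
      case 1
      with mult_closed have "?m -` U \<inter> topspace ?P = topspace ?P" by blast
      then show ?thesis by (metis openin_topspace)
    next
      case 2
      show ?thesis by (rule openin_vimage_mult_generated_topology[OF _ carrier L_cond 2]) auto
    next
      case 3
      show ?thesis by (rule openin_vimage_mult_generated_topology[OF _ carrier R_cond 3]) auto
    qed
  qed (use mult_closed carrier in simp)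
qed

end
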